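(* Let $\mathcal V$ be a finite vocabulary, $L\ge 1$ a sequence length, and $p_{\mathrm{data}}$ a distribution on $\mathcal V^L$ that factorizes over positions: $$p_{\mathrm{data}}(x)=\prod_{i=1}^{L} q^i_{x^i},$$ where each $q^i$ is a probability distribution on $\mathcal V$. Suppose the diffusion language model $p_\theta$ is optimally trained in the sense that for every partially masked sequence $x_t$ and every masked position $i$ of $x_t$, $p_\theta(x_0^i=v\mid x_t)=q^i_v$ for all $v\in\mathcal V$. Let $p_{\mathrm{lcr}}$ and $p_{\mathrm{dlcr}}$ be the distributions on $\mathcal V^L$ of the sequences produced (starting from the fully masked sequence) by low-confidence remasking and by dynamic low-confidence remasking with any threshold $\tau\in(0,1]$, respectively, as defined in the context. Then $$\mathcal H(p_{\mathrm{lcr}})\le \mathcal H(p_{\mathrm{data}}),\qquad \mathcal H(p_{\mathrm{dlcr}})\le \mathcal H(p_{\mathrm{data}}),$$ where $\mathcal H$ denotes the Shannon entropy of a distribution on $\mathcal V^L$.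
   Context: Superscripts index positions in a sequence of length $L$ over vocabulary $\mathcal V$; there is an extra mask symbol. The positions $1,\dots,L$ are partitioned into consecutive blocks of length $B$ (with $B$ dividing $L$), and blocks are generated one after another from left to right; generation of a block starts only after every position of the previous block has been decoded. Generation starts from the fully masked sequence. At each denoising step with current partially decoded sequence $x_t$, for every still-masked position $i$ in the current block one independently samples a token $y^i\sim p_\theta(x_0^i=\cdot\mid x_t)$ and assigns it confidence $c^i=p_\theta(x_0^i=y^i\mid x_t)$. Low-confidence remasking (with number of steps equal to block length, so one token per step): the single masked position of the current block with the highest confidence is set to its sampled token $y^i$, and all other masked positions remain masked (their samples are discarded). Dynamic low-confidence remasking with threshold $\tau$: the position with the highest confidence is decoded, and in addition every masked position in the current block whose confidence strictly exceeds $\tau$ is set to its sampled token; all remaining positions stay masked. Ties in confidence are broken by a fixed deterministic order. Low-confidence remasking coincides with dynamic low-confidence remasking with $\tau=1$. *)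

theory Defs
  imports "HOL-Probability.Probability"
begin

text \<open>Partially decoded sequences: positions 0..L-1; None = mask symbol.\<close>
type_synonym 'v pseq = "nat \<Rightarrow> 'v option"

definition shannon_entropy :: "'a pmf \<Rightarrow> real" where
  "shannon_entropy p = (\<Sum>x\<in>set_pmf p. - pmf p x * log 2 (pmf p x))"

definition cur_block :: "nat \<Rightarrow> nat \<Rightarrow> 'v pseq \<Rightarrow> nat set" where
  "cur_block L B x = (let m = (LEAST i. i < L \<and> x i = None)
                      in {m div B * B ..< (m div B + 1) * B})"

definition masked_in_block :: "nat \<Rightarrow> nat \<Rightarrow> 'v pseq \<Rightarrow> nat set" where
  "masked_in_block L B x = {i \<in> cur_block L B x. i < L \<and> x i = None}"

text \<open>Independent sampling y^i ~ p_theta(x_0^i = . | x_t) for the masked positions M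
  of the current block (positions outside M get None).\<close>
definition sample_block ::
  "nat \<Rightarrow> nat \<Rightarrow> ('v pseq \<Rightarrow> nat \<Rightarrow> 'v pmf) \<Rightarrow> 'v pseq \<Rightarrow> 'v pseq pmf" where
  "sample_block L B ptheta x =
     Pi_pmf (masked_in_block L B x) None (\<lambda>i. map_pmf Some (ptheta x i))"

definition confidence :: "('v pseq \<Rightarrow> nat \<Rightarrow> 'v pmf) \<Rightarrow> 'v pseq \<Rightarrow> 'v pseq \<Rightarrow> nat \<Rightarrow> real" where
  "confidence ptheta x y i = pmf (ptheta x i) (the (y i))"

definition best_pos ::
  "nat \<Rightarrow> nat \<Rightarrow> (nat \<Rightarrow> nat) \<Rightarrow> ('v pseq \<Rightarrow> nat \<Rightarrow> 'v pmf) \<Rightarrow> 'v pseq \<Rightarrow> 'v pseq \<Rightarrow> nat" where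
  "best_pos L B pr ptheta x y =
     (let M = masked_in_block L B x; c = confidence ptheta x y; cmax = Max (c ` M)
      in arg_min_on pr {i \<in> M. c i = cmax})"

definition lcr_step ::
  "nat \<Rightarrow> nat \<Rightarrow> (nat \<Rightarrow> nat) \<Rightarrow> ('v pseq \<Rightarrow> nat \<Rightarrow> 'v pmf) \<Rightarrow> 'v pseq \<Rightarrow> 'v pseq pmf" where
  "lcr_step L B pr ptheta x =
     (if \<forall>i<L. x i \<noteq> None then return_pmf x
      else map_pmf (\<lambda>y. let D = {best_pos L B pr ptheta x y}
                        in (\<lambda>i. if i \<in> D then y i else x i))
             (sample_block L B ptheta x))"

definition dlcr_step ::
  "nat \<Rightarrow> nat \<Rightarrow> real \<Rightarrow> (nat \<Rightarrow> nat) \<Rightarrow> ('v pseq \<Rightarrow> nat \<Rightarrow> 'v pmf) \<Rightarrow> 'v pseq \<Rightarrow> 'v pseq pmf" where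
  "dlcr_step L B tau pr ptheta x =
     (if \<forall>i<L. x i \<noteq> None then return_pmf x
      else map_pmf (\<lambda>y. let M = masked_in_block L B x;
                            D = insert (best_pos L B pr ptheta x y)
                                  {i \<in> M. confidence ptheta x y i > tau}
                        in (\<lambda>i. if i \<in> D then y i else x i))
             (sample_block L B ptheta x))"

text \<open>Output distribution on V^L (as lists of length L): start from the fully masked
  sequence and apply the step kernel L times (each step decodes at least one position,
  and fully decoded sequences are fixed points).\<close>
definition generate :: "nat \<Rightarrow> ('v pseq \<Rightarrow> 'v pseq pmf) \<Rightarrow> 'v list pmf" where
  "generate L K = map_pmf (\<lambda>x. map (\<lambda>i. the (x i)) [0..<L])
                    (((\<lambda>p. bind_pmf p K) ^^ L) (return_pmf (\<lambda>_. None)))"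

end

(* Give a partially decoded sequence the potential
     sum over decoded positions i of -log q_i(x_i)  +  sum over masked positions i of H(q_i).
   It equals H(p_data) on the fully masked sequence and -log p_data(x) on a fully decoded x.
   Under an optimally trained model one step samples the masked tokens of the block independently
   from the q_i and commits some of them. With the other samples fixed, whether position i is
   committed is monotone in the confidence q_i(y_i) of its sample, while the surprisal -log q_i(y_i)
   is antitone in it; by Chebyshev's sum inequality the committed token therefore has expected
   surprisal at most H(q_i), so the potential is a supermartingale. After L steps every position is
   decoded, and Gibbs' inequality gives
     H(p_out) <= E[-log p_data(x)] = E[potential of the output] <= H(p_data). *)

theory Submission
  imports Defs
begin

section \<open>Surprisal and entropy\<close>

definition surprisal :: "'a pmf \<Rightarrow> 'a \<Rightarrow> real" where
  "surprisal p x = - log 2 (pmf p x)"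

lemma surprisal_antimono:
  assumes "pmf p x > 0" "pmf p x \<le> pmf p y"
  shows "surprisal p y \<le> surprisal p x"
  using assms by (simp add: surprisal_def)

lemma shannon_entropy_eq_expectation:
  assumes "finite (set_pmf p)"
  shows "shannon_entropy p = measure_pmf.expectation p (surprisal p)"
  using assms
  by (subst integral_measure_pmf[of "set_pmf p"]) (auto simp: shannon_entropy_def surprisal_def)

lemma shannon_entropy_le_cross_entropy:
  assumes fin: "finite (set_pmf p)" and pos: "\<And>x. x \<in> set_pmf p \<Longrightarrow> pmf r x > 0"
  shows "shannon_entropy p \<le> measure_pmf.expectation p (surprisal r)"
proof -
  have term_le: "- pmf p x * log 2 (pmf p x) \<le> pmf p x * surprisal r x + (pmf r x - pmf p x) / ln 2"
    if x: "x \<in> set_pmf p" for x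
  proof -
    define a b where "a = pmf p x" and "b = pmf r x"
    have a: "a > 0" using x unfolding a_def by (simp add: pmf_positive)
    have b: "b > 0" using pos x unfolding b_def by simp
    have "a * (ln b - ln a) = a * ln (b / a)" using a b by (simp add: ln_div)
    also have "\<dots> \<le> a * (b / a - 1)" using a b by (intro mult_left_mono ln_le_minus_one) auto
    also have "\<dots> = b - a" using a by (simp add: field_simps)
    finally have "a * (ln b - ln a) / ln 2 \<le> (b - a) / ln 2" by (intro divide_right_mono) auto
    then show ?thesis unfolding a_def[symmetric] b_def[symmetric] surprisal_def log_def
      by (simp add: field_simps)
  qed
  have sum_p: "(\<Sum>x\<in>set_pmf p. pmf p x) = 1" using fin by (intro sum_pmf_eq_1) auto
  have sum_r: "(\<Sum>x\<in>set_pmf p. pmf r x) \<le> 1"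
    using fin by (simp add: measure_measure_pmf_finite[symmetric])
  have "shannon_entropy p \<le> (\<Sum>x\<in>set_pmf p. pmf p x * surprisal r x + (pmf r x - pmf p x) / ln 2)"
    unfolding shannon_entropy_def by (intro sum_mono term_le)
  also have "\<dots> = measure_pmf.expectation p (surprisal r)
      + ((\<Sum>x\<in>set_pmf p. pmf r x) - (\<Sum>x\<in>set_pmf p. pmf p x)) / ln 2"
    using fin by (simp add: integral_measure_pmf[of "set_pmf p"] sum.distrib sum_subtractf
        sum_divide_distrib[symmetric])
  also have "\<dots> \<le> measure_pmf.expectation p (surprisal r)"
    using sum_p sum_r by (simp add: divide_nonpos_pos)
  finally show ?thesis .
qed

lemma expectation_mult_le_oppositely_ordered:
  fixes f g :: "'a \<Rightarrow> real"
  assumes fin: "finite (set_pmf p)"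
    and opp: "\<And>x y. x \<in> set_pmf p \<Longrightarrow> y \<in> set_pmf p \<Longrightarrow> (f x - f y) * (g x - g y) \<le> 0"
  shows "measure_pmf.expectation p (\<lambda>x. f x * g x)
         \<le> measure_pmf.expectation p f * measure_pmf.expectation p g"
proof -
  let ?S = "set_pmf p" and ?w = "pmf p"
  have E: "measure_pmf.expectation p h = (\<Sum>x\<in>?S. ?w x * h x)" for h :: "'a \<Rightarrow> real"
    using fin by (subst integral_measure_pmf[of ?S]) auto
  define Ef Eg Efg where "Ef = (\<Sum>x\<in>?S. ?w x * f x)" and "Eg = (\<Sum>x\<in>?S. ?w x * g x)"
    and "Efg = (\<Sum>x\<in>?S. ?w x * (f x * g x))"
  have one: "(\<Sum>x\<in>?S. ?w x) = 1" using fin by (rule sum_pmf_eq_1) auto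
  have inner: "(\<Sum>y\<in>?S. ?w x * ?w y * ((f x - f y) * (g x - g y)))
      = ?w x * (f x * g x) - ?w x * f x * Eg - ?w x * g x * Ef + ?w x * Efg" for x
  proof -
    have "(\<Sum>y\<in>?S. ?w x * ?w y * ((f x - f y) * (g x - g y)))
        = (\<Sum>y\<in>?S. ?w x * (f x * g x) * ?w y - ?w x * f x * (?w y * g y)
             - ?w x * g x * (?w y * f y) + ?w x * (?w y * (f y * g y)))"
      by (intro sum.cong refl) (simp add: algebra_simps)
    also have "\<dots> = ?w x * (f x * g x) - ?w x * f x * Eg - ?w x * g x * Ef + ?w x * Efg"
      by (simp add: sum.distrib sum_subtractf Ef_def Eg_def Efg_def one flip: sum_distrib_left)
    finally show ?thesis .
  qed
  have "(\<Sum>x\<in>?S. \<Sum>y\<in>?S. ?w x * ?w y * ((f x - f y) * (g x - g y))) = 2 * (Efg - Ef * Eg)"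
    by (simp add: inner sum.distrib sum_subtractf Ef_def Eg_def Efg_def one flip: sum_distrib_right)
  moreover have "(\<Sum>x\<in>?S. \<Sum>y\<in>?S. ?w x * ?w y * ((f x - f y) * (g x - g y))) \<le> 0"
    by (intro sum_nonpos mult_nonneg_nonpos[OF _ opp]) auto
  ultimately show ?thesis by (simp add: E Ef_def Eg_def Efg_def)
qed

section \<open>Products and iterated kernels\<close>

lemma finite_set_Pi_pmf:
  assumes "finite A" "\<And>i. i \<in> A \<Longrightarrow> finite (set_pmf (p i))"
  shows "finite (set_pmf (Pi_pmf A d p))"
  using assms by (auto simp: set_Pi_pmf)

lemma expectation_Pi_pmf_split:
  fixes g :: "('a \<Rightarrow> 'b) \<Rightarrow> real"
  assumes fin: "finite A" "\<And>j. j \<in> A \<Longrightarrow> finite (set_pmf (p j))" and i: "i \<in> A"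
  shows "measure_pmf.expectation (Pi_pmf A d p) g
       = measure_pmf.expectation (Pi_pmf (A - {i}) d p)
           (\<lambda>f. measure_pmf.expectation (p i) (\<lambda>v. g (f(i := v))))"
proof -
  let ?P = "Pi_pmf (A - {i}) d p"
  have finP: "finite (set_pmf ?P)" using fin by (intro finite_set_Pi_pmf) auto
  have "Pi_pmf A d p = Pi_pmf (insert i (A - {i})) d p" using i by (simp add: insert_absorb)
  also have "\<dots> = bind_pmf ?P (\<lambda>f. map_pmf (\<lambda>v. f(i := v)) (p i))"
    using fin by (subst Pi_pmf_insert') (auto simp: map_pmf_def intro: bind_commute_pmf)
  finally have "measure_pmf.expectation (Pi_pmf A d p) g
      = (\<Sum>f\<in>set_pmf ?P. pmf ?P f *\<^sub>R measure_pmf.expectation (p i) (\<lambda>v. g (f(i := v))))"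
    using fin i by (simp add: pmf_expectation_bind[OF finP])
  also have "\<dots> = measure_pmf.expectation ?P (\<lambda>f. measure_pmf.expectation (p i) (\<lambda>v. g (f(i := v))))"
    by (rule integral_measure_pmf[symmetric, OF finP]) auto
  finally show ?thesis .
qed

lemma surprisal_product:
  fixes q :: "nat \<Rightarrow> 'a pmf" and p :: "'a list pmf"
  assumes p: "\<And>xs. pmf p xs = (if length xs = L then (\<Prod>i<L. pmf (q i) (xs ! i)) else 0)"
    and xs: "length xs = L" "\<And>i. i < L \<Longrightarrow> xs ! i \<in> set_pmf (q i)"
  shows "surprisal p xs = (\<Sum>i<L. surprisal (q i) (xs ! i))"
proof -
  have "ln (pmf p xs) = (\<Sum>i<L. ln (pmf (q i) (xs ! i)))"
    unfolding p using xs by (simp, intro ln_prod) (auto simp: set_pmf_iff)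
  then show ?thesis by (simp add: surprisal_def log_def sum_negf sum_divide_distrib)
qed

lemma product_pmf_eq_map_Pi_pmf:
  fixes q :: "nat \<Rightarrow> 'a pmf" and p :: "'a list pmf"
  assumes p: "\<And>xs. pmf p xs = (if length xs = L then (\<Prod>i<L. pmf (q i) (xs ! i)) else 0)"
  shows "p = map_pmf (\<lambda>f. map f [0..<L]) (Pi_pmf {..<L} d q)"
proof (rule pmf_eqI)
  fix xs :: "'a list"
  let ?T = "\<lambda>f. map f [0..<L]" and ?P = "Pi_pmf {..<L} d q"
  let ?F = "{f. \<forall>j. j \<notin> {..<L} \<longrightarrow> f j = d}"
  have "set_pmf ?P \<subseteq> ?F" by (rule set_Pi_pmf_subset) simp
  then have supp: "?T -` {xs} \<inter> set_pmf ?P = (?T -` {xs} \<inter> ?F) \<inter> set_pmf ?P" by blast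
  have "pmf (map_pmf ?T ?P) xs = measure ?P (?T -` {xs} \<inter> set_pmf ?P)"
    by (simp only: pmf_map measure_Int_set_pmf)
  also have "\<dots> = measure ?P (?T -` {xs} \<inter> ?F)"
    by (simp only: supp measure_Int_set_pmf)
  finally have pmf_map_T: "pmf (map_pmf ?T ?P) xs = measure ?P (?T -` {xs} \<inter> ?F)" .
  show "pmf p xs = pmf (map_pmf ?T ?P) xs"
  proof (cases "length xs = L")
    case False
    then have "?T -` {xs} = {}" by auto
    then show ?thesis using False by (simp add: p pmf_map_T)
  next
    case True
    define f0 where "f0 = (\<lambda>i. if i < L then xs ! i else d)"
    have "?T -` {xs} \<inter> ?F = {f0}"
    proof (intro equalityI subsetI)
      fix f assume f: "f \<in> ?T -` {xs} \<inter> ?F"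
      have "f i = f0 i" for i using f by (cases "i < L") (auto simp: f0_def)
      then show "f \<in> {f0}" by auto
    next
      fix f assume "f \<in> {f0}"
      moreover have "?T f0 = xs" using True by (intro nth_equalityI) (simp_all add: f0_def)
      ultimately show "f \<in> ?T -` {xs} \<inter> ?F" by (simp add: f0_def)
    qed
    moreover have "pmf ?P f0 = (\<Prod>i<L. pmf (q i) (f0 i))" by (rule pmf_Pi') (auto simp: f0_def)
    ultimately show ?thesis using True by (simp add: p pmf_map_T measure_pmf_single f0_def)
  qed
qed

lemma shannon_entropy_product:
  fixes q :: "nat \<Rightarrow> 'a pmf" and p :: "'a list pmf"
  assumes p: "\<And>xs. pmf p xs = (if length xs = L then (\<Prod>i<L. pmf (q i) (xs ! i)) else 0)"
    and fin: "\<And>i. i < L \<Longrightarrow> finite (set_pmf (q i))"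
  shows "shannon_entropy p = (\<Sum>i<L. shannon_entropy (q i))"
proof -
  define P where "P = Pi_pmf {..<L} undefined q"
  have p_eq: "p = map_pmf (\<lambda>f. map f [0..<L]) P"
    unfolding P_def by (rule product_pmf_eq_map_Pi_pmf[OF p])
  have finP: "finite (set_pmf P)" unfolding P_def using fin by (intro finite_set_Pi_pmf) auto
  have "shannon_entropy p = measure_pmf.expectation p (surprisal p)"
    using finP by (intro shannon_entropy_eq_expectation) (simp add: p_eq)
  also have "\<dots> = measure_pmf.expectation (map_pmf (\<lambda>f. map f [0..<L]) P) (surprisal p)"
    by (simp flip: p_eq)
  also have "\<dots> = measure_pmf.expectation P (\<lambda>f. \<Sum>i<L. surprisal (q i) (f i))"
  proof (simp, intro integral_cong_AE)
    show "AE f in measure_pmf P. surprisal p (map f [0..<L]) = (\<Sum>i<L. surprisal (q i) (f i))"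
      unfolding AE_measure_pmf_iff P_def
      by (auto simp: set_Pi_pmf PiE_dflt_def surprisal_product[OF p])
  qed auto
  also have "\<dots> = (\<Sum>i<L. measure_pmf.expectation (map_pmf (\<lambda>f. f i) P) (surprisal (q i)))"
    by (simp add: integral_sum integrable_measure_pmf_finite[OF finP])
  also have "\<dots> = (\<Sum>i<L. shannon_entropy (q i))"
    unfolding P_def
    by (intro sum.cong refl) (simp add: Pi_pmf_component shannon_entropy_eq_expectation fin)
  finally show ?thesis .
qed

(* Truncated subtraction: \<mu> y \<le> \<mu> x - 1 says that \<mu> strictly decreases until it reaches 0. *)
lemma funpow_bind_pmf_invariant:
  fixes K :: "'a \<Rightarrow> 'a pmf" and \<mu> :: "'a \<Rightarrow> nat"
  assumes init: "\<And>x. x \<in> set_pmf p \<Longrightarrow> x \<in> S \<and> \<mu> x \<le> m"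
    and step: "\<And>x y. x \<in> S \<Longrightarrow> y \<in> set_pmf (K x) \<Longrightarrow> y \<in> S \<and> \<mu> y \<le> \<mu> x - 1"
    and x: "x \<in> set_pmf (((\<lambda>p. bind_pmf p K) ^^ n) p)"
  shows "x \<in> S \<and> \<mu> x \<le> m - n"
  using init x
proof (induction n arbitrary: p m)
  case (Suc n)
  have "y \<in> S \<and> \<mu> y \<le> m - 1" if "y \<in> set_pmf (bind_pmf p K)" for y
    using that Suc.prems(1) step by fastforce
  moreover have "x \<in> set_pmf (((\<lambda>p. bind_pmf p K) ^^ n) (bind_pmf p K))"
    using Suc.prems(2) by (simp only: funpow_Suc_right o_apply)
  ultimately show ?case using Suc.IH[of "bind_pmf p K" "m - 1"] by simp
qed simp

lemma expectation_funpow_bind_pmf_le: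
  fixes K :: "'a \<Rightarrow> 'a pmf" and \<Phi> :: "'a \<Rightarrow> real"
  assumes S: "finite S" "\<And>x. x \<in> S \<Longrightarrow> set_pmf (K x) \<subseteq> S"
    and decr: "\<And>x. x \<in> S \<Longrightarrow> measure_pmf.expectation (K x) \<Phi> \<le> \<Phi> x"
    and "set_pmf p \<subseteq> S"
  shows "measure_pmf.expectation (((\<lambda>p. bind_pmf p K) ^^ n) p) \<Phi> \<le> measure_pmf.expectation p \<Phi>"
  using \<open>set_pmf p \<subseteq> S\<close>
proof (induction n arbitrary: p)
  case (Suc n)
  have fin: "\<And>x. x \<in> S \<Longrightarrow> finite (set_pmf (K x))" using S by (meson finite_subset)
  have "measure_pmf.expectation (bind_pmf p K) \<Phi>
      = (\<Sum>x\<in>S. pmf p x * measure_pmf.expectation (K x) \<Phi>)"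
    using Suc.prems by (simp add: pmf_expectation_bind[OF S(1) fin])
  also have "\<dots> \<le> (\<Sum>x\<in>S. pmf p x * \<Phi> x)" by (intro sum_mono mult_left_mono decr) auto
  also have "\<dots> = measure_pmf.expectation p \<Phi>"
    using Suc.prems by (subst integral_measure_pmf[OF S(1)]) auto
  finally have "measure_pmf.expectation (bind_pmf p K) \<Phi> \<le> measure_pmf.expectation p \<Phi>" .
  moreover have "set_pmf (bind_pmf p K) \<subseteq> S" using Suc.prems S(2) by auto
  ultimately show ?case using Suc.IH[of "bind_pmf p K"] unfolding funpow_Suc_right o_apply
    by linarith
qed simp

section \<open>Decoding steps\<close>

definition consistent_states :: "nat \<Rightarrow> (nat \<Rightarrow> 'v pmf) \<Rightarrow> 'v pseq set" where
  "consistent_states L q =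
     {x. (\<forall>j\<ge>L. x j = None) \<and> (\<forall>i w. x i = Some w \<longrightarrow> w \<in> set_pmf (q i))}"

definition num_masked :: "nat \<Rightarrow> 'v pseq \<Rightarrow> nat" where
  "num_masked L x = card {i. i < L \<and> x i = None}"

definition token_potential :: "(nat \<Rightarrow> 'v pmf) \<Rightarrow> nat \<Rightarrow> 'v option \<Rightarrow> real" where
  "token_potential q i v = (case v of None \<Rightarrow> shannon_entropy (q i) | Some w \<Rightarrow> surprisal (q i) w)"

definition potential :: "nat \<Rightarrow> (nat \<Rightarrow> 'v pmf) \<Rightarrow> 'v pseq \<Rightarrow> real" where
  "potential L q x = (\<Sum>i<L. token_potential q i (x i))"

definition decode_step ::
  "nat \<Rightarrow> nat \<Rightarrow> ('v pseq \<Rightarrow> nat \<Rightarrow> 'v pmf) \<Rightarrow> ('v pseq \<Rightarrow> 'v pseq \<Rightarrow> nat set) \<Rightarrow>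
     'v pseq \<Rightarrow> 'v pseq pmf" where
  "decode_step L B ptheta D x =
     (if \<forall>i<L. x i \<noteq> None then return_pmf x
      else map_pmf (\<lambda>y i. if i \<in> D x y then y i else x i) (sample_block L B ptheta x))"

definition lcr_positions ::
  "nat \<Rightarrow> nat \<Rightarrow> (nat \<Rightarrow> nat) \<Rightarrow> ('v pseq \<Rightarrow> nat \<Rightarrow> 'v pmf) \<Rightarrow> 'v pseq \<Rightarrow> 'v pseq \<Rightarrow> nat set" where
  "lcr_positions L B pr ptheta x y = {best_pos L B pr ptheta x y}"

definition dlcr_positions ::
  "nat \<Rightarrow> nat \<Rightarrow> real \<Rightarrow> (nat \<Rightarrow> nat) \<Rightarrow> ('v pseq \<Rightarrow> nat \<Rightarrow> 'v pmf) \<Rightarrow> 'v pseq \<Rightarrow> 'v pseq \<Rightarrow>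
     nat set" where
  "dlcr_positions L B tau pr ptheta x y =
     insert (best_pos L B pr ptheta x y) {i \<in> masked_in_block L B x. confidence ptheta x y i > tau}"

lemma lcr_step_eq_decode_step:
  "lcr_step L B pr ptheta = decode_step L B ptheta (lcr_positions L B pr ptheta)"
  by (intro ext) (unfold lcr_step_def decode_step_def lcr_positions_def Let_def, rule refl)

lemma dlcr_step_eq_decode_step:
  "dlcr_step L B tau pr ptheta = decode_step L B ptheta (dlcr_positions L B tau pr ptheta)"
  by (intro ext) (unfold dlcr_step_def decode_step_def dlcr_positions_def Let_def, rule refl)

lemma finite_consistent_states: "finite (consistent_states L q :: 'v::finite pseq set)"
proof (rule finite_subset)
  show "consistent_states L q \<subseteq> PiE_dflt {..<L} None (\<lambda>_. UNIV)"
    by (auto simp: consistent_states_def PiE_dflt_def)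
qed auto

lemma masked_in_block_subset: "masked_in_block L B x \<subseteq> {i. i < L \<and> x i = None}"
  by (auto simp: masked_in_block_def)

lemma finite_masked_in_block: "finite (masked_in_block L B x)"
  using masked_in_block_subset by (rule finite_subset) simp

lemma masked_in_block_nonempty:
  assumes "B > 0" and "\<exists>i<L. x i = None"
  shows "masked_in_block L B x \<noteq> {}"
proof -
  define m where "m = (LEAST i. i < L \<and> x i = None)"
  have m: "m < L" "x m = None" using LeastI_ex[OF assms(2)] unfolding m_def by auto
  have "m \<in> cur_block L B x"
    using dividend_less_div_times[OF assms(1), of m]
    by (simp add: cur_block_def m_def[symmetric])
  then show ?thesis using m by (auto simp: masked_in_block_def)
qed

lemma decode_step_optimal:
  assumes "\<And>xt i. (\<forall>j\<ge>L. xt j = None) \<Longrightarrow> i < L \<Longrightarrow> xt i = None \<Longrightarrow> ptheta xt i = q i"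
    and "\<forall>j\<ge>L. x j = None" and "\<not> (\<forall>i<L. x i \<noteq> None)"
  shows "decode_step L B ptheta D x =
           map_pmf (\<lambda>y i. if i \<in> D x y then y i else x i)
             (Pi_pmf (masked_in_block L B x) None (\<lambda>i. map_pmf Some (q i)))"
proof -
  have "sample_block L B ptheta x = Pi_pmf (masked_in_block L B x) None (\<lambda>i. map_pmf Some (q i))"
    unfolding sample_block_def using assms(1,2)
    by (intro Pi_pmf_cong) (auto simp: masked_in_block_def)
  then show ?thesis unfolding decode_step_def if_not_P[OF assms(3)] by simp
qed

section \<open>The highest-confidence position\<close>

lemma arg_min_on_eq_iff:
  fixes f :: "'a \<Rightarrow> 'b::linorder"
  assumes S: "finite S" and inj: "inj_on f S" and i: "i \<in> S"
  shows "arg_min_on f S = i \<longleftrightarrow> (\<forall>j\<in>S. f i \<le> f j)"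
proof
  show "arg_min_on f S = i \<Longrightarrow> \<forall>j\<in>S. f i \<le> f j"
    using S i arg_min_least[of S _ f] by blast
next
  assume min: "\<forall>j\<in>S. f i \<le> f j"
  have b: "arg_min_on f S \<in> S" using S i by (intro arg_min_if_finite(1)) auto
  have "f (arg_min_on f S) \<le> f i" using S i by (intro arg_min_least) auto
  with min b have "f (arg_min_on f S) = f i" by (simp add: order.antisym)
  then show "arg_min_on f S = i" by (rule inj_onD[OF inj _ b i])
qed

lemma best_pos_max_confidence:
  assumes "masked_in_block L B x \<noteq> {}"
  shows "best_pos L B pr ptheta x y \<in> masked_in_block L B x"
    and "confidence ptheta x y (best_pos L B pr ptheta x y)
           = Max (confidence ptheta x y ` masked_in_block L B x)"
proof -
  let ?M = "masked_in_block L B x" and ?c = "confidence ptheta x y"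
  let ?T = "{j \<in> ?M. ?c j = Max (?c ` ?M)}"
  have "Max (?c ` ?M) \<in> ?c ` ?M" using assms finite_masked_in_block by (intro Max_in) auto
  then obtain j where "j \<in> ?M" "?c j = Max (?c ` ?M)" by (metis imageE)
  then have "?T \<noteq> {}" by blast
  moreover have "finite ?T" using finite_masked_in_block[of L B x] by simp
  ultimately have "arg_min_on pr ?T \<in> ?T" by (intro arg_min_if_finite(1))
  then show "best_pos L B pr ptheta x y \<in> ?M" "?c (best_pos L B pr ptheta x y) = Max (?c ` ?M)"
    by (simp_all add: best_pos_def Let_def)
qed

lemma best_pos_eq_iff:
  assumes inj: "inj_on pr (masked_in_block L B x)" and i: "i \<in> masked_in_block L B x"
  shows "best_pos L B pr ptheta x y = i \<longleftrightarrow>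
    (\<forall>j\<in>masked_in_block L B x. confidence ptheta x y j \<le> confidence ptheta x y i \<and>
       (confidence ptheta x y j = confidence ptheta x y i \<longrightarrow> pr i \<le> pr j))"
proof -
  let ?M = "masked_in_block L B x" and ?c = "confidence ptheta x y"
  have M: "finite ?M" using finite_masked_in_block .
  show ?thesis
  proof (cases "\<forall>j\<in>?M. ?c j \<le> ?c i")
    case True
    then have "Max (?c ` ?M) = ?c i" using M i by (intro Max_eqI) auto
    then have best: "best_pos L B pr ptheta x y = arg_min_on pr {j \<in> ?M. ?c j = ?c i}"
      by (simp add: best_pos_def Let_def)
    have "arg_min_on pr {j \<in> ?M. ?c j = ?c i} = i \<longleftrightarrow> (\<forall>j\<in>{j \<in> ?M. ?c j = ?c i}. pr i \<le> pr j)"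
      using M i inj by (intro arg_min_on_eq_iff) (auto intro: inj_on_subset)
    then show ?thesis unfolding best using True by auto
  next
    case False
    have "best_pos L B pr ptheta x y \<noteq> i"
    proof
      assume "best_pos L B pr ptheta x y = i"
      then have "?c i = Max (?c ` ?M)"
        using best_pos_max_confidence(2)[where pr=pr and ptheta=ptheta and y=y] i by auto
      then show False using False M by auto
    qed
    then show ?thesis using False by auto
  qed
qed

lemma best_pos_fun_upd_mono:
  assumes inj: "inj_on pr (masked_in_block L B x)" and i: "i \<in> masked_in_block L B x"
    and le: "pmf (ptheta x i) w' \<le> pmf (ptheta x i) w"
    and best: "best_pos L B pr ptheta x (y(i := Some w')) = i"
  shows "best_pos L B pr ptheta x (y(i := Some w)) = i"
proof -
  let ?c' = "confidence ptheta x (y(i := Some w'))" and ?c = "confidence ptheta x (y(i := Some w))"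
  have c: "?c' i \<le> ?c i" "\<And>j. j \<noteq> i \<Longrightarrow> ?c j = ?c' j" using le by (auto simp: confidence_def)
  have best': "?c' j \<le> ?c' i \<and> (?c' j = ?c' i \<longrightarrow> pr i \<le> pr j)"
    if "j \<in> masked_in_block L B x" for j
    using best that unfolding best_pos_eq_iff[OF inj i] by blast
  show ?thesis unfolding best_pos_eq_iff[OF inj i]
  proof
    fix j assume j: "j \<in> masked_in_block L B x"
    show "?c j \<le> ?c i \<and> (?c j = ?c i \<longrightarrow> pr i \<le> pr j)"
    proof (cases "j = i")
      case False
      then show ?thesis using best'[OF j] c(1) c(2)[OF False] by auto
    qed simp
  qed
qed

lemma dlcr_positions_fun_upd_mono:
  assumes inj: "inj_on pr (masked_in_block L B x)" and i: "i \<in> masked_in_block L B x"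
    and le: "pmf (ptheta x i) w' \<le> pmf (ptheta x i) w"
    and "i \<in> dlcr_positions L B tau pr ptheta x (y(i := Some w'))"
  shows "i \<in> dlcr_positions L B tau pr ptheta x (y(i := Some w))"
  using assms best_pos_fun_upd_mono[where ptheta=ptheta and y=y, OF inj i le]
  by (auto simp: dlcr_positions_def confidence_def)

section \<open>The potential is a supermartingale\<close>

lemma expectation_decoding_gain_nonpos:
  fixes q :: "nat \<Rightarrow> 'v::finite pmf" and decode :: "(nat \<Rightarrow> 'v option) \<Rightarrow> bool"
  assumes M: "finite M" "i \<in> M"
    and mono: "\<And>y w w'. pmf (q i) w' \<le> pmf (q i) w \<Longrightarrow> decode (y(i := Some w')) \<Longrightarrow>
                  decode (y(i := Some w))"
  shows "measure_pmf.expectation (Pi_pmf M None (\<lambda>j. map_pmf Some (q j)))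
           (\<lambda>y. if decode y then token_potential q i (y i) - shannon_entropy (q i) else 0) \<le> 0"
proof -
  let ?g = "\<lambda>y. if decode y then token_potential q i (y i) - shannon_entropy (q i) else 0"
  have inner: "measure_pmf.expectation (map_pmf Some (q i)) (\<lambda>v. ?g (y(i := v))) \<le> 0" for y
  proof -
    define h :: "'v \<Rightarrow> real" where "h w = of_bool (decode (y(i := Some w)))" for w
    let ?s = "surprisal (q i)" and ?E = "measure_pmf.expectation (q i)"
    have opp: "(h w - h w') * (?s w - ?s w') \<le> 0"
      if "w \<in> set_pmf (q i)" "w' \<in> set_pmf (q i)" for w w'
    proof (cases "pmf (q i) w' \<le> pmf (q i) w")
      case True
      then have "h w' \<le> h w" "?s w \<le> ?s w'"
        using mono[OF True] that by (auto simp: h_def surprisal_antimono pmf_positive)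
      then show ?thesis by (simp add: mult_nonneg_nonpos)
    next
      case False
      then have "h w \<le> h w'" "?s w' \<le> ?s w"
        using mono[of w w'] that by (auto simp: h_def surprisal_antimono pmf_positive)
      then show ?thesis by (simp add: mult_nonpos_nonneg)
    qed
    have int: "integrable (measure_pmf (q i)) f" for f :: "'v \<Rightarrow> real"
      by (rule integrable_measure_pmf_finite) simp
    have "measure_pmf.expectation (map_pmf Some (q i)) (\<lambda>v. ?g (y(i := v)))
        = ?E (\<lambda>w. ?g (y(i := Some w)))"
      by simp
    also have "\<dots> = ?E (\<lambda>w. h w * ?s w - h w * shannon_entropy (q i))"
      by (intro Bochner_Integration.integral_cong refl) (simp add: h_def token_potential_def)
    also have "\<dots> = ?E (\<lambda>w. h w * ?s w) - ?E h * ?E ?s"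
      by (simp add: int shannon_entropy_eq_expectation)
    also have "\<dots> \<le> 0"
      using expectation_mult_le_oppositely_ordered[of "q i" h ?s] opp by simp
    finally show ?thesis .
  qed
  have "measure_pmf.expectation (Pi_pmf M None (\<lambda>j. map_pmf Some (q j))) ?g
      = measure_pmf.expectation (Pi_pmf (M - {i}) None (\<lambda>j. map_pmf Some (q j)))
          (\<lambda>y. measure_pmf.expectation (map_pmf Some (q i)) (\<lambda>v. ?g (y(i := v))))"
    using M by (intro expectation_Pi_pmf_split) auto
  also have "\<dots> \<le> 0"
  proof -
    have "0 \<le> measure_pmf.expectation (Pi_pmf (M - {i}) None (\<lambda>j. map_pmf Some (q j)))
          (\<lambda>y. - measure_pmf.expectation (map_pmf Some (q i)) (\<lambda>v. ?g (y(i := v))))"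
      by (intro integral_nonneg_AE AE_I2) (simp only: inner neg_0_le_iff_le)
    then show ?thesis by (simp only: Bochner_Integration.integral_minus neg_0_le_iff_le)
  qed
  finally show ?thesis .
qed

lemma decode_step_invariant:
  assumes optimal: "\<And>xt i. (\<forall>j\<ge>L. xt j = None) \<Longrightarrow> i < L \<Longrightarrow> xt i = None \<Longrightarrow> ptheta xt i = q i"
    and D_sub: "\<And>y. \<exists>i<L. x i = None \<Longrightarrow> D x y \<subseteq> masked_in_block L B x"
    and D_ne: "\<And>y. \<exists>i<L. x i = None \<Longrightarrow> D x y \<noteq> {}"
    and x: "x \<in> consistent_states L q"
    and x': "x' \<in> set_pmf (decode_step L B ptheta D x)"
  shows "x' \<in> consistent_states L q \<and> num_masked L x' \<le> num_masked L x - 1"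
proof (cases "\<forall>i<L. x i \<noteq> None")
  case True
  then have "num_masked L x = 0" by (simp add: num_masked_def)
  then show ?thesis using True x x' by (simp add: decode_step_def)
next
  case False
  let ?M = "masked_in_block L B x"
  have xL: "\<forall>j\<ge>L. x j = None" using x by (simp add: consistent_states_def)
  obtain y where y: "y \<in> set_pmf (Pi_pmf ?M None (\<lambda>i. map_pmf Some (q i)))"
    and x'_def: "x' = (\<lambda>i. if i \<in> D x y then y i else x i)"
    using x' by (auto simp: decode_step_optimal[OF optimal xL False])
  have y_sampled: "y i \<in> Some ` set_pmf (q i)" if "i \<in> ?M" for i
    using y that by (auto simp: set_Pi_pmf finite_masked_in_block PiE_dflt_def)
  have DM: "D x y \<subseteq> ?M" "D x y \<noteq> {}" using D_sub D_ne False by auto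
  have decoded: "y i \<noteq> None" if "i \<in> D x y" for i using that DM(1) y_sampled by blast
  have "x' \<in> consistent_states L q"
    using x DM(1) masked_in_block_subset y_sampled
    by (fastforce simp: consistent_states_def x'_def)
  moreover have "num_masked L x' < num_masked L x"
  proof -
    obtain d where d: "d \<in> D x y" using DM(2) by auto
    have "{i. i < L \<and> x' i = None} \<subseteq> {i. i < L \<and> x i = None} - {d}"
    proof
      fix i assume i: "i \<in> {i. i < L \<and> x' i = None}"
      then have "i \<notin> D x y" using decoded[of i] by (auto simp: x'_def)
      then show "i \<in> {i. i < L \<and> x i = None} - {d}" using i d by (auto simp: x'_def)
    qed
    also have "\<dots> \<subset> {i. i < L \<and> x i = None}"
      using d DM(1) masked_in_block_subset by blast
    finally show ?thesis unfolding num_masked_def by (intro psubset_card_mono) auto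
  qed
  ultimately show ?thesis by simp
qed

lemma expectation_potential_decode_step_le:
  fixes q :: "nat \<Rightarrow> 'v::finite pmf"
  assumes optimal: "\<And>xt i. (\<forall>j\<ge>L. xt j = None) \<Longrightarrow> i < L \<Longrightarrow> xt i = None \<Longrightarrow> ptheta xt i = q i"
    and D_sub: "\<And>y. \<exists>i<L. x i = None \<Longrightarrow> D x y \<subseteq> masked_in_block L B x"
    and D_mono: "\<And>i y w w'. i \<in> masked_in_block L B x \<Longrightarrow> pmf (ptheta x i) w' \<le> pmf (ptheta x i) w \<Longrightarrow>
                   i \<in> D x (y(i := Some w')) \<Longrightarrow> i \<in> D x (y(i := Some w))"
    and x: "x \<in> consistent_states L q"
  shows "measure_pmf.expectation (decode_step L B ptheta D x) (potential L q) \<le> potential L q x"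
proof (cases "\<forall>i<L. x i \<noteq> None")
  case True
  then show ?thesis by (simp add: decode_step_def)
next
  case False
  let ?M = "masked_in_block L B x"
  let ?Y = "Pi_pmf (masked_in_block L B x) None (\<lambda>i. map_pmf Some (q i))"
  let ?gain = "\<lambda>i y. if i \<in> D x y then token_potential q i (y i) - shannon_entropy (q i) else 0"
  have xL: "\<forall>j\<ge>L. x j = None" using x by (simp add: consistent_states_def)
  have M: "finite ?M" "?M \<subseteq> {i. i < L \<and> x i = None}"
    by (rule finite_masked_in_block, rule masked_in_block_subset)
  have DM: "D x y \<subseteq> ?M" for y using D_sub False by auto
  have D_masked: "x i = None" if "i \<in> D x y" for i y using that DM M(2) by blast
  have potential_update:
    "potential L q (\<lambda>i. if i \<in> D x y then y i else x i)
       = potential L q x + (\<Sum>i\<in>?M. ?gain i y)" for y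
  proof -
    have "potential L q (\<lambda>i. if i \<in> D x y then y i else x i)
        = (\<Sum>i<L. token_potential q i (x i) + ?gain i y)"
      unfolding potential_def
      by (intro sum.cong refl) (auto simp: token_potential_def D_masked[of _ y])
    also have "\<dots> = potential L q x + (\<Sum>i<L. ?gain i y)" by (simp add: potential_def sum.distrib)
    also have "(\<Sum>i<L. ?gain i y) = (\<Sum>i\<in>?M. ?gain i y)"
      using DM M(2) by (intro sum.mono_neutral_right) auto
    finally show ?thesis .
  qed
  have finY: "finite (set_pmf ?Y)" using M(1) by (intro finite_set_Pi_pmf) auto
  have "measure_pmf.expectation (decode_step L B ptheta D x) (potential L q)
      = measure_pmf.expectation ?Y (\<lambda>y. potential L q x + (\<Sum>i\<in>?M. ?gain i y))"
    by (simp add: decode_step_optimal[OF optimal xL False] potential_update)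
  also have "\<dots> = potential L q x + (\<Sum>i\<in>?M. measure_pmf.expectation ?Y (?gain i))"
    by (simp add: integral_sum integrable_measure_pmf_finite[OF finY])
  also have "\<dots> \<le> potential L q x"
  proof -
    have "measure_pmf.expectation ?Y (?gain i) \<le> 0" if i: "i \<in> ?M" for i
    proof (rule expectation_decoding_gain_nonpos[OF M(1) i])
      have "ptheta x i = q i" using i M(2) by (intro optimal[OF xL]) auto
      then show "i \<in> D x (y(i := Some w))"
        if "pmf (q i) w' \<le> pmf (q i) w" "i \<in> D x (y(i := Some w'))" for y w w'
        using D_mono[OF i] that by simp
    qed
    then show ?thesis by (simp add: sum_nonpos)
  qed
  finally show ?thesis .
qed

lemma potential_decoded:
  fixes q :: "nat \<Rightarrow> 'v pmf"
  assumes p_data: "\<And>xs. pmf p_data xs = (if length xs = L then (\<Prod>i<L. pmf (q i) (xs ! i)) else 0)"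
    and x: "x \<in> consistent_states L q" and decoded: "\<forall>i<L. x i \<noteq> None"
  shows "pmf p_data (map (\<lambda>i. the (x i)) [0..<L]) > 0"
    and "potential L q x = surprisal p_data (map (\<lambda>i. the (x i)) [0..<L])"
proof -
  have tok: "the (x i) \<in> set_pmf (q i)" if "i < L" for i
    using x decoded that by (auto simp: consistent_states_def)
  show "pmf p_data (map (\<lambda>i. the (x i)) [0..<L]) > 0"
    unfolding p_data using tok by (simp, intro prod_pos) (auto intro: pmf_positive)
  have "potential L q x = (\<Sum>i<L. surprisal (q i) (the (x i)))"
    unfolding potential_def token_potential_def using decoded
    by (intro sum.cong refl) (auto split: option.split)
  also have "\<dots> = surprisal p_data (map (\<lambda>i. the (x i)) [0..<L])"
    using tok by (simp add: surprisal_product[OF p_data])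
  finally show "potential L q x = surprisal p_data (map (\<lambda>i. the (x i)) [0..<L])" .
qed

lemma shannon_entropy_generate_le:
  fixes q :: "nat \<Rightarrow> 'v::finite pmf" and K :: "'v pseq \<Rightarrow> 'v pseq pmf"
  assumes p_data: "\<And>xs. pmf p_data xs = (if length xs = L then (\<Prod>i<L. pmf (q i) (xs ! i)) else 0)"
    and step: "\<And>x x'. x \<in> consistent_states L q \<Longrightarrow> x' \<in> set_pmf (K x) \<Longrightarrow>
                 x' \<in> consistent_states L q \<and> num_masked L x' \<le> num_masked L x - 1"
    and decr: "\<And>x. x \<in> consistent_states L q \<Longrightarrow>
                 measure_pmf.expectation (K x) (potential L q) \<le> potential L q x"
  shows "shannon_entropy (generate L K) \<le> shannon_entropy p_data"
proof -
  let ?S = "consistent_states L q :: 'v pseq set"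
  define p where "p = ((\<lambda>p. bind_pmf p K) ^^ L) (return_pmf (\<lambda>_. None))"
  define to_list where "to_list = (\<lambda>x :: 'v pseq. map (\<lambda>i. the (x i)) [0..<L])"
  have gen: "generate L K = map_pmf to_list p" by (simp add: generate_def p_def to_list_def)
  have start: "(\<lambda>_. None) \<in> ?S" "num_masked L (\<lambda>_. None :: 'v option) = L"
    by (auto simp: consistent_states_def num_masked_def)
  have final: "x \<in> ?S" "\<forall>i<L. x i \<noteq> None" if "x \<in> set_pmf p" for x
  proof -
    have init: "\<And>z. z \<in> set_pmf (return_pmf (\<lambda>_. None)) \<Longrightarrow> z \<in> ?S \<and> num_masked L z \<le> L"
      using start by auto
    have "x \<in> ?S \<and> num_masked L x \<le> L - L"
      using funpow_bind_pmf_invariant[OF init step that[unfolded p_def]] .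
    moreover have "finite {i. i < L \<and> x i = None}" by simp
    ultimately show "x \<in> ?S" "\<forall>i<L. x i \<noteq> None" by (simp_all add: num_masked_def)
  qed
  have "set_pmf p \<subseteq> ?S" using final(1) by blast
  then have "finite (set_pmf p)" using finite_consistent_states by (rule finite_subset)
  then have fin: "finite (set_pmf (generate L K))" by (simp add: gen)
  have "shannon_entropy (generate L K) \<le> measure_pmf.expectation (generate L K) (surprisal p_data)"
    using fin final potential_decoded(1)[OF p_data]
    by (intro shannon_entropy_le_cross_entropy) (auto simp: gen to_list_def)
  also have "\<dots> = measure_pmf.expectation p (potential L q)"
    unfolding gen using final potential_decoded(2)[OF p_data]
    by (simp, intro integral_cong_AE) (auto simp: AE_measure_pmf_iff to_list_def)
  also have "\<dots> \<le> measure_pmf.expectation (return_pmf (\<lambda>_. None)) (potential L q)"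
    unfolding p_def
  proof (rule expectation_funpow_bind_pmf_le[OF finite_consistent_states[of L q] _ decr])
    show "set_pmf (K x) \<subseteq> ?S" if "x \<in> ?S" for x using step[OF that] by blast
  next
    show "set_pmf (return_pmf (\<lambda>_. None)) \<subseteq> ?S" using start(1) by simp
  qed
  also have "\<dots> = (\<Sum>i<L. shannon_entropy (q i))" by (simp add: potential_def token_potential_def)
  also have "\<dots> = shannon_entropy p_data"
    by (rule shannon_entropy_product[OF p_data, symmetric]) simp
  finally show ?thesis .
qed

lemma shannon_entropy_generate_decode_step_le:
  fixes q :: "nat \<Rightarrow> 'v::finite pmf"
  assumes p_data: "\<And>xs. pmf p_data xs = (if length xs = L then (\<Prod>i<L. pmf (q i) (xs ! i)) else 0)"
    and optimal: "\<And>xt i. (\<forall>j\<ge>L. xt j = None) \<Longrightarrow> i < L \<Longrightarrow> xt i = None \<Longrightarrow> ptheta xt i = q i"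
    and D_sub: "\<And>x y. \<exists>i<L. x i = None \<Longrightarrow> D x y \<subseteq> masked_in_block L B x"
    and D_ne: "\<And>x y. \<exists>i<L. x i = None \<Longrightarrow> D x y \<noteq> {}"
    and D_mono: "\<And>x i y w w'. i \<in> masked_in_block L B x \<Longrightarrow> pmf (ptheta x i) w' \<le> pmf (ptheta x i) w \<Longrightarrow>
                   i \<in> D x (y(i := Some w')) \<Longrightarrow> i \<in> D x (y(i := Some w))"
  shows "shannon_entropy (generate L (decode_step L B ptheta D)) \<le> shannon_entropy p_data"
proof (rule shannon_entropy_generate_le[OF p_data])
  show "x' \<in> consistent_states L q \<and> num_masked L x' \<le> num_masked L x - 1"
    if "x \<in> consistent_states L q" "x' \<in> set_pmf (decode_step L B ptheta D x)" for x x'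
    using decode_step_invariant[OF optimal D_sub D_ne that] .
  show "measure_pmf.expectation (decode_step L B ptheta D x) (potential L q) \<le> potential L q x"
    if "x \<in> consistent_states L q" for x
    using expectation_potential_decode_step_le[where ptheta=ptheta and D=D and x=x,
        OF optimal D_sub D_mono that] .
qed

theorem mainTheorem1:
  fixes L B :: nat
    and q :: "nat \<Rightarrow> ('v::finite) pmf"
    and p_data :: "'v list pmf"
    and ptheta :: "'v pseq \<Rightarrow> nat \<Rightarrow> 'v pmf"
    and pr :: "nat \<Rightarrow> nat"
    and tau :: real
  assumes "L \<ge> 1" and "B \<ge> 1" and "B dvd L"
    and "\<And>x. pmf p_data x = (if length x = L then (\<Prod>i<L. pmf (q i) (x ! i)) else 0)"
    and "\<And>xt i. (\<forall>j\<ge>L. xt j = None) \<Longrightarrow> i < L \<Longrightarrow> xt i = None \<Longrightarrow> ptheta xt i = q i"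
    and "inj_on pr {..<L}"
    and "0 < tau" and "tau \<le> 1"
  shows "shannon_entropy (generate L (lcr_step L B pr ptheta)) \<le> shannon_entropy p_data
       \<and> shannon_entropy (generate L (dlcr_step L B tau pr ptheta)) \<le> shannon_entropy p_data"
proof -
  note p_data = assms(4) and optimal = assms(5)
  have inj: "inj_on pr (masked_in_block L B x)" for x
    using assms(6) by (rule inj_on_subset) (use masked_in_block_subset in blast)
  have best: "best_pos L B pr ptheta x y \<in> masked_in_block L B x" if "\<exists>i<L. x i = None" for x y
    using masked_in_block_nonempty[OF _ that] assms(2) by (intro best_pos_max_confidence(1)) simp
  have "shannon_entropy (generate L (lcr_step L B pr ptheta)) \<le> shannon_entropy p_data"
    unfolding lcr_step_eq_decode_step
    by (rule shannon_entropy_generate_decode_step_le[OF p_data optimal])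
      (auto simp: lcr_positions_def best best_pos_fun_upd_mono[OF inj])
  moreover have
    "shannon_entropy (generate L (dlcr_step L B tau pr ptheta)) \<le> shannon_entropy p_data"
    unfolding dlcr_step_eq_decode_step
  proof (rule shannon_entropy_generate_decode_step_le[OF p_data optimal])
    fix x i y w w'
    assume "i \<in> masked_in_block L B x" "pmf (ptheta x i) w' \<le> pmf (ptheta x i) w"
      and "i \<in> dlcr_positions L B tau pr ptheta x (y(i := Some w'))"
    then show "i \<in> dlcr_positions L B tau pr ptheta x (y(i := Some w))"
      by (rule dlcr_positions_fun_upd_mono[OF inj])
  qed (auto simp: dlcr_positions_def best)
  ultimately show ?thesis ..
qed

end
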